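(* Let $\mathcal{D}$ be a $\{K_3,K_4\}$-decomposition of $K_{18}$ with $\alpha=13$, let $W$ be the set of vertices $x$ with $\alpha_x\ge 2$, and for $i\in\{0,1,2,3\}$ let $t_i$ be the number of copies of $K_3$ in $\mathcal{D}$ having exactly $i$ vertices in $W$. Then $(t_0,t_1,t_2,t_3)\neq(1,1,6,5)$.
   Context: A $\{K_3,K_4\}$-decomposition of $K_v$ is a collection of subgraphs, each isomorphic to $K_3$ or $K_4$, such that every edge of $K_v$ lies in exactly one of them. $\alpha$ is the number of copies of $K_3$ in the decomposition, and for a vertex $x$, $\alpha_x$ is the number of copies of $K_3$ in the decomposition containing $x$. *)

theory Defs
  imports Main
begin

text \<open>A copy of K_3 or K_4 in K_V is determined by its vertex set (a 3- or 4-subset of V).\<close>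

definition K34_decomp :: "'a set \<Rightarrow> 'a set set \<Rightarrow> bool" where
  "K34_decomp V D \<longleftrightarrow>
     (\<forall>B\<in>D. B \<subseteq> V \<and> (card B = 3 \<or> card B = 4)) \<and>
     (\<forall>x\<in>V. \<forall>y\<in>V. x \<noteq> y \<longrightarrow> (\<exists>!B. B \<in> D \<and> x \<in> B \<and> y \<in> B))"

definition triangles :: "'a set set \<Rightarrow> 'a set set" where
  "triangles D = {B \<in> D. card B = 3}"

definition alpha :: "'a set set \<Rightarrow> nat" where
  "alpha D = card (triangles D)"

definition alpha_at :: "'a set set \<Rightarrow> 'a \<Rightarrow> nat" where
  "alpha_at D x = card {B \<in> triangles D. x \<in> B}"

end

theory Submission
  imports Defs
begin

text \<open>Write a(x) = alpha_at D x and b(x) = beta_at D x for the numbers of copies of K_3 and K_4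
  at x. Counting the 17 neighbours of x gives 2a(x) + 3b(x) = 17, so a(x) is odd and every
  vertex outside W lies in exactly one triangle. The prescribed t gives a total of 28 for a on W,
  and the total 3\<cdot>13 = 39 of a on V then forces |W| = 7, whence b sums to 21 on W. The triangles
  already cover 6\<cdot>1 + 5\<cdot>3 = 21 = C(7,2) pairs inside W, so each copy of K_4 meets W at most
  once and there are at least 21 of them; but counting edges, 153 = 3\<cdot>13 + 6q leaves only
  q = 19.\<close>

lemma sum_card_Int_eq_sum_card_containing:
  assumes "finite F" "finite S"
  shows "(\<Sum>B\<in>F. card (B \<inter> S)) = (\<Sum>x\<in>S. card {B \<in> F. x \<in> B})"
proof -
  have "card (B \<inter> S) = (\<Sum>x\<in>S. if x \<in> B then 1 else 0)" for B
  proof -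
    have "B \<inter> S = {x \<in> S. x \<in> B}"
      by auto
    then show ?thesis
      using assms(2) by (simp add: sum.inter_filter[symmetric])
  qed
  moreover have "card {B \<in> F. x \<in> B} = (\<Sum>B\<in>F. if x \<in> B then 1 else 0)" for x
    using assms(1) by (simp add: sum.inter_filter[symmetric])
  ultimately show ?thesis
    using sum.swap by simp
qed

lemma sum_eq_sum_card_fibres:
  fixes f :: "'a \<Rightarrow> nat"
  assumes "finite F" "f ` F \<subseteq> {..n}"
  shows "(\<Sum>B\<in>F. h (f B)) = (\<Sum>i\<le>n. h i * card {B \<in> F. f B = i})"
proof -
  have "(\<Sum>B\<in>F. h (f B)) = (\<Sum>i\<le>n. \<Sum>B\<in>{B \<in> F. f B = i}. h (f B))"
    by (rule sum.group[symmetric]) (use assms in simp_all)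
  then show ?thesis
    by (simp add: mult.commute)
qed

definition pairwise_balanced :: "'a set \<Rightarrow> 'a set set \<Rightarrow> bool" where
  "pairwise_balanced V D \<longleftrightarrow>
     (\<forall>B\<in>D. B \<subseteq> V) \<and> (\<forall>x\<in>V. \<forall>y\<in>V. x \<noteq> y \<longrightarrow> (\<exists>!B. B \<in> D \<and> x \<in> B \<and> y \<in> B))"

lemma pairwise_balanced_finite:
  assumes "pairwise_balanced V D" "finite V"
  shows "finite D"
proof (rule finite_subset)
  show "D \<subseteq> Pow V"
    using assms(1) unfolding pairwise_balanced_def by auto
qed (use assms(2) in simp)

lemma pairwise_balanced_block_unique:
  assumes "pairwise_balanced V D" "B \<in> D" "B' \<in> D" "{x, y} \<subseteq> B" "{x, y} \<subseteq> B'" "x \<noteq> y"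
  shows "B = B'"
proof -
  have "x \<in> V" "y \<in> V"
    using assms(1,2,4) unfolding pairwise_balanced_def by auto
  then have "\<exists>!B. B \<in> D \<and> x \<in> B \<and> y \<in> B"
    using assms(1,6) unfolding pairwise_balanced_def by simp
  then show ?thesis
    using assms(2-5) by auto
qed

lemma pairwise_balanced_block_exists:
  assumes "pairwise_balanced V D" "x \<in> V" "y \<in> V" "x \<noteq> y"
  obtains B where "B \<in> D" "{x, y} \<subseteq> B"
proof -
  have "\<exists>!B. B \<in> D \<and> x \<in> B \<and> y \<in> B"
    using assms unfolding pairwise_balanced_def by simp
  then show ?thesis
    using that by auto
qed

lemma pairwise_balanced_sum_card_minus_one:
  assumes "pairwise_balanced V D" "finite V" "x \<in> V"
  shows "(\<Sum>B\<in>{B \<in> D. x \<in> B}. card B - 1) = card V - 1"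
proof -
  let ?D\<^sub>x = "{B \<in> D. x \<in> B}"
  have blocks: "B \<subseteq> V" if "B \<in> D" for B
    using assms(1) that unfolding pairwise_balanced_def by auto
  have "V - {x} = (\<Union>B\<in>?D\<^sub>x. B - {x})"
  proof
    show "V - {x} \<subseteq> (\<Union>B\<in>?D\<^sub>x. B - {x})"
    proof
      fix y assume "y \<in> V - {x}"
      then obtain B where "B \<in> D" "{x, y} \<subseteq> B"
        using pairwise_balanced_block_exists[OF assms(1,3)] by auto
      then show "y \<in> (\<Union>B\<in>?D\<^sub>x. B - {x})"
        using \<open>y \<in> V - {x}\<close> by auto
    qed
  qed (use blocks in auto)
  also have "card \<dots> = (\<Sum>B\<in>?D\<^sub>x. card (B - {x}))"
  proof (rule card_UN_disjoint)
    show "finite ?D\<^sub>x"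
      using pairwise_balanced_finite[OF assms(1,2)] by simp
    show "\<forall>B\<in>?D\<^sub>x. finite (B - {x})"
      using blocks assms(2) by (auto intro: finite_subset)
    show "\<forall>B\<in>?D\<^sub>x. \<forall>B'\<in>?D\<^sub>x. B \<noteq> B' \<longrightarrow> (B - {x}) \<inter> (B' - {x}) = {}"
      using pairwise_balanced_block_unique[OF assms(1)] by fastforce
  qed
  finally show ?thesis
    using assms(3) by simp
qed

lemma pairwise_balanced_sum_card_choose_two:
  assumes "pairwise_balanced V D" "finite V" "S \<subseteq> V"
  shows "(\<Sum>B\<in>D. card (B \<inter> S) choose 2) = card S choose 2"
proof -
  let ?pairs = "\<lambda>A. {e. e \<subseteq> A \<and> card e = 2}"
  have "finite S"
    using assms(2,3) by (rule rev_finite_subset)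
  have "card S choose 2 = card (?pairs S)"
    using \<open>finite S\<close> by (simp add: n_subsets)
  also have "?pairs S = (\<Union>B\<in>D. ?pairs (B \<inter> S))"
  proof
    show "?pairs S \<subseteq> (\<Union>B\<in>D. ?pairs (B \<inter> S))"
    proof
      fix e assume e: "e \<in> ?pairs S"
      then obtain x y where xy: "e = {x, y}" "x \<noteq> y"
        by (auto simp: card_2_iff)
      then obtain B where "B \<in> D" "{x, y} \<subseteq> B"
        using pairwise_balanced_block_exists[OF assms(1), of x y] assms(3) e by auto
      then show "e \<in> (\<Union>B\<in>D. ?pairs (B \<inter> S))"
        using e xy by auto
    qed
  qed auto
  also have "card \<dots> = (\<Sum>B\<in>D. card (?pairs (B \<inter> S)))"
  proof (rule card_UN_disjoint)
    show "finite D"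
      using assms(1,2) by (rule pairwise_balanced_finite)
    show "\<forall>B\<in>D. finite (?pairs (B \<inter> S))"
      using \<open>finite S\<close> by simp
    show "\<forall>B\<in>D. \<forall>B'\<in>D. B \<noteq> B' \<longrightarrow> ?pairs (B \<inter> S) \<inter> ?pairs (B' \<inter> S) = {}"
      using pairwise_balanced_block_unique[OF assms(1)] by (fastforce simp: card_2_iff)
  qed
  also have "\<dots> = (\<Sum>B\<in>D. card (B \<inter> S) choose 2)"
    using \<open>finite S\<close> by (intro sum.cong refl n_subsets) simp
  finally show ?thesis ..
qed

definition quadruples :: "'a set set \<Rightarrow> 'a set set" where
  "quadruples D = {B \<in> D. card B = 4}"

definition beta_at :: "'a set set \<Rightarrow> 'a \<Rightarrow> nat" where
  "beta_at D x = card {B \<in> quadruples D. x \<in> B}"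

lemma K34_decomp_imp_pairwise_balanced: "K34_decomp V D \<Longrightarrow> pairwise_balanced V D"
  unfolding K34_decomp_def pairwise_balanced_def by blast

lemma K34_decomp_finite: "K34_decomp V D \<Longrightarrow> finite V \<Longrightarrow> finite D"
  using K34_decomp_imp_pairwise_balanced pairwise_balanced_finite by blast

lemma K34_decomp_sum_blocks:
  assumes "K34_decomp V D" "finite V"
  shows "(\<Sum>B\<in>D. g B) = (\<Sum>B\<in>triangles D. g B) + (\<Sum>B\<in>quadruples D. g B)"
proof -
  have "D = triangles D \<union> quadruples D" "triangles D \<inter> quadruples D = {}"
    using assms(1) unfolding K34_decomp_def triangles_def quadruples_def by auto
  then show ?thesis
    using K34_decomp_finite[OF assms] by (metis finite_Un sum.union_disjoint)
qed

lemma K34_decomp_degree: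
  assumes "K34_decomp V D" "finite V" "x \<in> V"
  shows "2 * alpha_at D x + 3 * beta_at D x = card V - 1"
proof -
  let ?T = "{B \<in> triangles D. x \<in> B}" and ?Q = "{B \<in> quadruples D. x \<in> B}"
  have "{B \<in> D. x \<in> B} = ?T \<union> ?Q" "?T \<inter> ?Q = {}"
    using assms(1) unfolding K34_decomp_def triangles_def quadruples_def by auto
  then have "(\<Sum>B\<in>{B \<in> D. x \<in> B}. card B - 1) = (\<Sum>B\<in>?T. card B - 1) + (\<Sum>B\<in>?Q. card B - 1)"
    using K34_decomp_finite[OF assms(1,2)]
    by (simp add: sum.union_disjoint triangles_def quadruples_def)
  also have "\<dots> = 2 * alpha_at D x + 3 * beta_at D x"
    by (simp add: alpha_at_def beta_at_def triangles_def quadruples_def)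
  finally show ?thesis
    using pairwise_balanced_sum_card_minus_one[OF K34_decomp_imp_pairwise_balanced[OF assms(1)]
        assms(2,3)]
    by simp
qed

lemma K34_decomp_alpha_at_pos:
  assumes "K34_decomp V D" "finite V" "x \<in> V" "\<not> 3 dvd card V - 1"
  shows "0 < alpha_at D x"
proof (rule ccontr)
  assume "\<not> 0 < alpha_at D x"
  then have "card V - 1 = 3 * beta_at D x"
    using K34_decomp_degree[OF assms(1-3)] by simp
  with assms(4) show False
    by simp
qed

lemma K34_decomp_sum_degree:
  assumes "K34_decomp V D" "finite V" "S \<subseteq> V"
  shows "2 * (\<Sum>x\<in>S. alpha_at D x) + 3 * (\<Sum>x\<in>S. beta_at D x) = card S * (card V - 1)"
proof -
  have "(\<Sum>x\<in>S. 2 * alpha_at D x + 3 * beta_at D x) = (\<Sum>x\<in>S. card V - 1)"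
    using K34_decomp_degree[OF assms(1,2)] assms(3) by (intro sum.cong) auto
  then show ?thesis
    by (simp add: sum.distrib sum_distrib_left)
qed

lemma K34_decomp_edge_count:
  assumes "K34_decomp V D" "finite V"
  shows "3 * alpha D + 6 * card (quadruples D) = card V choose 2"
proof -
  have "B \<inter> V = B" if "B \<in> D" for B
    using assms(1) that unfolding K34_decomp_def by auto
  then have "card V choose 2 = (\<Sum>B\<in>D. card B choose 2)"
    using pairwise_balanced_sum_card_choose_two[OF K34_decomp_imp_pairwise_balanced[OF assms(1)]
        assms(2) order_refl]
    by simp
  also have "\<dots> = (\<Sum>B\<in>triangles D. card B choose 2) + (\<Sum>B\<in>quadruples D. card B choose 2)"
    by (rule K34_decomp_sum_blocks[OF assms])
  also have "\<dots> = 3 * alpha D + 6 * card (quadruples D)"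
    by (simp add: alpha_def triangles_def quadruples_def choose_two)
  finally show ?thesis ..
qed

lemma sum_alpha_at_eq_sum_card_Int:
  "finite D \<Longrightarrow> finite S \<Longrightarrow> (\<Sum>x\<in>S. alpha_at D x) = (\<Sum>B\<in>triangles D. card (B \<inter> S))"
  unfolding alpha_at_def triangles_def by (simp add: sum_card_Int_eq_sum_card_containing)

lemma sum_beta_at_eq_sum_card_Int:
  "finite D \<Longrightarrow> finite S \<Longrightarrow> (\<Sum>x\<in>S. beta_at D x) = (\<Sum>B\<in>quadruples D. card (B \<inter> S))"
  unfolding beta_at_def quadruples_def by (simp add: sum_card_Int_eq_sum_card_containing)

lemma K34_decomp_sum_alpha_at:
  assumes "K34_decomp V D" "finite V"
  shows "(\<Sum>x\<in>V. alpha_at D x) = 3 * alpha D"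
proof -
  have "card (B \<inter> V) = 3" if "B \<in> triangles D" for B
    using assms(1) that unfolding K34_decomp_def triangles_def by (simp add: Int_absorb2)
  then show ?thesis
    using K34_decomp_finite[OF assms] assms(2)
    by (simp add: sum_alpha_at_eq_sum_card_Int alpha_def)
qed

lemma K34_decomp_sum_alpha_at_heavy:
  assumes "K34_decomp V D" "finite V" "\<forall>x\<in>V. 0 < alpha_at D x"
  shows "(\<Sum>x\<in>{x \<in> V. 2 \<le> alpha_at D x}. alpha_at D x) + card {x \<in> V. alpha_at D x < 2}
    = 3 * alpha D"
proof -
  let ?H = "{x \<in> V. 2 \<le> alpha_at D x}" and ?L = "{x \<in> V. alpha_at D x < 2}"
  have "(\<Sum>x\<in>?L. alpha_at D x) = (\<Sum>x\<in>?L. 1)"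
    using assms(3) by (intro sum.cong) auto
  moreover have "(\<Sum>x\<in>V. alpha_at D x) = (\<Sum>x\<in>?H. alpha_at D x) + (\<Sum>x\<in>?L. alpha_at D x)"
    using assms(2) by (subst sum.union_disjoint[symmetric]) (auto intro: sum.cong)
  ultimately show ?thesis
    using K34_decomp_sum_alpha_at[OF assms(1,2)] by simp
qed

lemma K34_decomp_sum_beta_at_le:
  assumes "K34_decomp V D" "finite V" "S \<subseteq> V"
    and "(\<Sum>B\<in>triangles D. card (B \<inter> S) choose 2) = card S choose 2"
  shows "(\<Sum>x\<in>S. beta_at D x) \<le> card (quadruples D)"
proof -
  have "finite D" "finite (quadruples D)" "finite S"
    using K34_decomp_finite[OF assms(1,2)] assms(2,3) finite_subset
    by (auto simp: quadruples_def)
  have "(\<Sum>B\<in>D. card (B \<inter> S) choose 2) = card S choose 2"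
    using pairwise_balanced_sum_card_choose_two[OF K34_decomp_imp_pairwise_balanced] assms(1-3) .
  then have "(\<Sum>B\<in>quadruples D. card (B \<inter> S) choose 2) = 0"
    using assms(4) K34_decomp_sum_blocks[OF assms(1,2), of "\<lambda>B. card (B \<inter> S) choose 2"]
    by simp
  then have "card (B \<inter> S) \<le> 1" if "B \<in> quadruples D" for B
    using that \<open>finite (quadruples D)\<close> by fastforce
  then have "(\<Sum>B\<in>quadruples D. card (B \<inter> S)) \<le> card (quadruples D)"
    using sum_mono[of "quadruples D" "\<lambda>B. card (B \<inter> S)" "\<lambda>_. 1"] by simp
  then show ?thesis
    using sum_beta_at_eq_sum_card_Int[OF \<open>finite D\<close> \<open>finite S\<close>] by simp
qed

lemma triangles_card_Int_le: "B \<in> triangles D \<Longrightarrow> card (B \<inter> S) \<le> 3"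
  unfolding triangles_def
  by (metis (mono_tags) card.infinite card_mono inf_le1 mem_Collect_eq zero_neq_numeral)

theorem mainTheorem12:
  fixes V :: "'a set" and D :: "'a set set"
  assumes "finite V" and "card V = 18"
    and "K34_decomp V D"
    and "alpha D = 13"
  defines "W \<equiv> {x \<in> V. alpha_at D x \<ge> 2}"
  defines "t \<equiv> (\<lambda>i::nat. card {B \<in> triangles D. card (B \<inter> W) = i})"
  shows "(t 0, t 1, t 2, t 3) \<noteq> (1, 1, 6, 5)"
proof
  assume "(t 0, t 1, t 2, t 3) = (1, 1, 6, 5)"
  then have t: "t 0 = 1" "t 1 = 1" "t 2 = 6" "t 3 = 5"
    by simp_all
  have "W \<subseteq> V" "finite W" "finite D"
    using assms(1) K34_decomp_finite[OF assms(3,1)] finite_subset by (auto simp: W_def)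
  have by_level: "(\<Sum>B\<in>triangles D. h (card (B \<inter> W))) = (\<Sum>i\<le>3. h i * t i)" for h
    using \<open>finite D\<close> triangles_card_Int_le unfolding t_def
    by (intro sum_eq_sum_card_fibres) (auto simp: triangles_def)
  have alpha_W: "(\<Sum>x\<in>W. alpha_at D x) = 28"
    using by_level[of id] t sum_alpha_at_eq_sum_card_Int[OF \<open>finite D\<close> \<open>finite W\<close>]
    by (simp add: numeral_eq_Suc atMost_Suc)
  have pairs_W: "(\<Sum>B\<in>triangles D. card (B \<inter> W) choose 2) = 21"
    using by_level[of "\<lambda>i. i choose 2"] t by (simp add: numeral_eq_Suc atMost_Suc)
  have "{x \<in> V. alpha_at D x < 2} = V - W"
    unfolding W_def by auto
  then have "card W = 7"
    using K34_decomp_sum_alpha_at_heavy[OF assms(3,1)] K34_decomp_alpha_at_pos[OF assms(3,1)]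
      alpha_W assms(2,4) card_Diff_subset[OF \<open>finite W\<close> \<open>W \<subseteq> V\<close>]
      card_mono[OF assms(1) \<open>W \<subseteq> V\<close>]
    unfolding W_def by simp
  then have "(\<Sum>x\<in>W. beta_at D x) = 21"
    using K34_decomp_sum_degree[OF assms(3,1) \<open>W \<subseteq> V\<close>] alpha_W assms(2) by simp
  moreover have "(\<Sum>x\<in>W. beta_at D x) \<le> card (quadruples D)"
    using K34_decomp_sum_beta_at_le[OF assms(3,1) \<open>W \<subseteq> V\<close>] pairs_W \<open>card W = 7\<close>
    by (simp add: choose_two)
  moreover have "card (quadruples D) = 19"
    using K34_decomp_edge_count[OF assms(3,1)] assms(2,4) by (simp add: choose_two)
  ultimately show False
    by simp
qed

end
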